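(* Let $\operatorname{Fr}(f)$ be the number of numerical semigroups with Frobenius number $f$, and $\operatorname{Fr}_q(f)$ the number of those with depth $q$. Then $\operatorname{Fr}(f) \sim \operatorname{Fr}_2(f) + \operatorname{Fr}_3(f)$ as $f \to \infty$.
   Context: A numerical semigroup is a subset $\Lambda \subseteq \mathbb{N}_0$ containing $0$, closed under addition, with finite complement. Its multiplicity is $m(\Lambda) = \min(\Lambda \setminus \{0\})$, its conductor $c(\Lambda)$ is the least $c$ with $c + \mathbb{N}_0 \subseteq \Lambda$, its Frobenius number is $c(\Lambda)-1$, and its depth is $\lceil c(\Lambda)/m(\Lambda) \rceil$. *)

theory Defs
  imports Complex_Main "HOL-Library.Landau_Symbols"
begin

definition numerical_semigroup :: "nat set \<Rightarrow> bool" where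
  "numerical_semigroup S \<longleftrightarrow> 0 \<in> S \<and> (\<forall>x\<in>S. \<forall>y\<in>S. x + y \<in> S) \<and> finite (UNIV - S)"

definition multiplicity_ns :: "nat set \<Rightarrow> nat" where
  "multiplicity_ns S = (LEAST m. m \<in> S \<and> m \<noteq> 0)"

definition conductor :: "nat set \<Rightarrow> nat" where
  "conductor S = (LEAST c. \<forall>n\<ge>c. n \<in> S)"

definition frobenius :: "nat set \<Rightarrow> int" where
  "frobenius S = int (conductor S) - 1"

definition depth :: "nat set \<Rightarrow> nat" where
  "depth S = nat \<lceil>real (conductor S) / real (multiplicity_ns S)\<rceil>"

definition Fr :: "nat \<Rightarrow> nat" where
  "Fr f = card {S. numerical_semigroup S \<and> frobenius S = int f}"

definition Fr_depth :: "nat \<Rightarrow> nat \<Rightarrow> nat" where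
  "Fr_depth q f = card {S. numerical_semigroup S \<and> frobenius S = int f \<and> depth S = q}"

end

theory Submission
  imports Defs "HOL-Library.FuncSet" "HOL-Library.Disjoint_Sets" "HOL-Real_Asymp.Real_Asymp"
begin

(*
  Depth 2 alone accounts for at least 2^(f - 2 - f div 2) semigroups: for every subset A of
  {f div 2 + 1<..<f}, the set {0, f div 2 + 1} + A + {f<..} is a numerical semigroup with
  Frobenius number f and depth 2.  The semigroups of any other depth than 2 and 3 are
  {0} + {f<..} (depth 1) and those whose multiplicity m satisfies 3 m <= f (depth >= 4), so it
  suffices to count the latter for each such m and compare with 2^(f/2).

  A semigroup of multiplicity m is determined by its Kunz coordinates k_r (r < m), where
  k_r m + r is its least element congruent to r; k_0 = 0 and k_(f mod m) = f div m + 1 are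
  forced.  The other ones satisfy 0 < k_r <= b_r for bounds b_r with sum at most f, and
  k_r + k_s >= b_r whenever r + s = f (mod m).  Against the target of 2^(b_r / 2) choices per
  residue, such a pair {r, s} with b_r = b_s = b >= 4 admits at most 0.9 * 2^b choices.  Bound 3 allows no saving on pairs; it occurs when f div m = 3 for residues
  above f mod m, and when these dominate, the constraint k_(2r) <= 2 k_r saves on quadruples
  {r, s, 2r, s'} instead.  At least (m - 16) / 8 residues save, so there are at most
  2^(f/2) 0.9^((m - 16) / 16) semigroups of multiplicity m; this is small for m > sqrt f, and for
  m <= sqrt f the trivial bound (f + 2)^m is small as well.
*)

section \<open>Numerical semigroups with given Frobenius number and multiplicity\<close>

lemma conductor_eqI:
  assumes "f \<notin> S" "\<And>n. f < n \<Longrightarrow> n \<in> S"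
  shows "conductor S = f + 1"
  unfolding conductor_def
proof (rule Least_equality)
  show "\<forall>n\<ge>f + 1. n \<in> S"
    using assms(2) by simp
  show "f + 1 \<le> c" if "\<forall>n\<ge>c. n \<in> S" for c
  proof (rule ccontr)
    assume "\<not> f + 1 \<le> c"
    then show False
      using that assms(1) by simp
  qed
qed

lemma multiplicity_eqI:
  assumes "a \<in> S" "0 < a" "\<And>x. x \<in> S \<Longrightarrow> 0 < x \<Longrightarrow> a \<le> x"
  shows "multiplicity_ns S = a"
  unfolding multiplicity_ns_def using assms by (intro Least_equality) auto

lemma depth_le_iff:
  assumes "0 < multiplicity_ns S"
  shows "depth S \<le> q \<longleftrightarrow> conductor S \<le> q * multiplicity_ns S"
proof -
  have "depth S \<le> q \<longleftrightarrow> real (conductor S) / real (multiplicity_ns S) \<le> real q"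
    unfolding depth_def by (simp add: nat_le_iff ceiling_le_iff)
  also have "\<dots> \<longleftrightarrow> conductor S \<le> q * multiplicity_ns S"
    using assms by (simp add: divide_le_eq flip: of_nat_mult)
  finally show ?thesis .
qed

locale frobenius_semigroup =
  fixes S :: "nat set" and f m :: nat
  assumes numerical_semigroup: "numerical_semigroup S"
    and frobenius_eq: "frobenius S = int f"
    and multiplicity_eq: "multiplicity_ns S = m"
begin

lemma zero_mem: "0 \<in> S"
  using numerical_semigroup unfolding numerical_semigroup_def by blast

lemma add_mem: "x \<in> S \<Longrightarrow> y \<in> S \<Longrightarrow> x + y \<in> S"
  using numerical_semigroup unfolding numerical_semigroup_def by blast

lemma add_mult_mem:
  assumes "x \<in> S" "a \<in> S" shows "x + j * a \<in> S"
proof (induction j)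
  case (Suc j)
  then have "(x + j * a) + a \<in> S"
    using assms(2) by (rule add_mem)
  then show ?case
    by (simp add: algebra_simps)
qed (use assms in simp)

lemma conductor_eq: "conductor S = f + 1"
  using frobenius_eq unfolding frobenius_def by linarith

lemma eventually_mem: "\<exists>c. \<forall>n\<ge>c. n \<in> S"
proof -
  have "finite (UNIV - S)"
    using numerical_semigroup unfolding numerical_semigroup_def by blast
  then obtain c where "\<forall>n\<in>UNIV - S. n < c"
    using finite_nat_set_iff_bounded by blast
  then show ?thesis
    by (meson DiffI UNIV_I not_le)
qed

lemma frobenius_less_imp_mem: "f < n \<Longrightarrow> n \<in> S"
  using LeastI_ex[OF eventually_mem] conductor_eq unfolding conductor_def by simp

lemma frobenius_not_mem: "f \<notin> S"
proof
  assume "f \<in> S"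
  then have "\<forall>n\<ge>f. n \<in> S"
    using frobenius_less_imp_mem by (auto simp: le_less)
  then have "conductor S \<le> f"
    unfolding conductor_def by (rule Least_le)
  then show False
    using conductor_eq by simp
qed

lemma multiplicity_mem: "m \<in> S" and multiplicity_pos: "0 < m"
proof -
  have "f + 1 \<in> S \<and> f + 1 \<noteq> 0"
    using frobenius_less_imp_mem by simp
  then have "multiplicity_ns S \<in> S \<and> multiplicity_ns S \<noteq> 0"
    unfolding multiplicity_ns_def by (rule LeastI)
  then show "m \<in> S" "0 < m"
    using multiplicity_eq by auto
qed

lemma multiplicity_le: "x \<in> S \<Longrightarrow> x \<noteq> 0 \<Longrightarrow> m \<le> x"
  using multiplicity_eq unfolding multiplicity_ns_def by (metis (mono_tags) Least_le)

lemma multiplicity_le_Suc_frobenius: "m \<le> f + 1"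
  using multiplicity_le frobenius_less_imp_mem by simp

lemma depth_le_iff_Suc_frobenius_le: "depth S \<le> q \<longleftrightarrow> f + 1 \<le> q * m"
  using depth_le_iff[of S q] multiplicity_pos conductor_eq multiplicity_eq by simp

lemma multiplicity_eq_if_depth_le_1: "depth S \<le> 1 \<Longrightarrow> m = f + 1"
  using depth_le_iff_Suc_frobenius_le[of 1] multiplicity_le_Suc_frobenius by simp

lemma three_le_div_if_four_le_depth: "4 \<le> depth S \<Longrightarrow> 3 \<le> f div m"
  using depth_le_iff_Suc_frobenius_le[of 3] multiplicity_pos
  by (simp add: less_eq_div_iff_mult_less_eq)

lemma eq_if_multiplicity_Suc_frobenius:
  assumes "m = f + 1" shows "S = {x. x = 0 \<or> f < x}"
proof (intro set_eqI iffI)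
  fix x assume "x \<in> S"
  then show "x \<in> {x. x = 0 \<or> f < x}"
    using multiplicity_le[of x] assms by fastforce
next
  fix x assume "x \<in> {x. x = 0 \<or> f < x}"
  then show "x \<in> S"
    using zero_mem frobenius_less_imp_mem by auto
qed

end

section \<open>Kunz coordinates\<close>

(* For k = kunz S m r, the number k * m + r is the element of the Apery set of S with respect
   to m in the residue class of r. *)
definition kunz :: "nat set \<Rightarrow> nat \<Rightarrow> nat \<Rightarrow> nat" where
  "kunz S m r = (LEAST k. k * m + r \<in> S)"

context frobenius_semigroup
begin

lemma frobenius_less_Suc_mult_add: "f < (f + 1) * m + r"
proof -
  have "f + 1 \<le> (f + 1) * m"
    using mult_le_mono2[of 1 m "f + 1"] multiplicity_pos by simp
  then show ?thesis
    by linarith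
qed

lemma kunz_mem: "kunz S m r * m + r \<in> S"
  unfolding kunz_def by (rule LeastI, rule frobenius_less_imp_mem[OF frobenius_less_Suc_mult_add])

lemma kunz_le: "k * m + r \<in> S \<Longrightarrow> kunz S m r \<le> k"
  unfolding kunz_def by (rule Least_le)

lemma kunz_le_Suc_frobenius: "kunz S m r \<le> f + 1"
  by (rule kunz_le[OF frobenius_less_imp_mem[OF frobenius_less_Suc_mult_add]])

lemma mem_iff_kunz: "x \<in> S \<longleftrightarrow> kunz S m (x mod m) \<le> x div m"
proof
  assume "x \<in> S"
  then show "kunz S m (x mod m) \<le> x div m"
    by (intro kunz_le) simp
next
  assume "kunz S m (x mod m) \<le> x div m"
  then obtain d where d: "x div m = kunz S m (x mod m) + d"
    using le_Suc_ex by blast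
  have "kunz S m (x mod m) * m + x mod m + d * m \<in> S"
    using kunz_mem multiplicity_mem by (rule add_mult_mem)
  also have "kunz S m (x mod m) * m + x mod m + d * m = x"
    using div_mult_mod_eq[of x m] unfolding d by (simp add: algebra_simps)
  finally show "x \<in> S" .
qed

lemma kunz_zero: "kunz S m 0 = 0"
  using kunz_le[of 0 0] zero_mem by simp

lemma kunz_pos:
  assumes "0 < r" "r < m" shows "0 < kunz S m r"
proof (rule ccontr)
  assume "\<not> 0 < kunz S m r"
  then have "r \<in> S"
    using kunz_mem[of r] by simp
  then show False
    using multiplicity_le assms by fastforce
qed

lemma frobenius_mod_pos: "0 < f mod m"
proof (rule ccontr)
  assume "\<not> 0 < f mod m"
  then have "f = 0 + (f div m) * m"
    using div_mult_mod_eq[of f m] by simp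
  also have "\<dots> \<in> S"
    using zero_mem multiplicity_mem by (rule add_mult_mem)
  finally show False
    using frobenius_not_mem by simp
qed

lemma kunz_frobenius_mod: "kunz S m (f mod m) = f div m + 1"
proof -
  have "f + m \<in> S"
    using frobenius_less_imp_mem multiplicity_pos by simp
  then have "kunz S m (f mod m) \<le> f div m + 1"
    using mem_iff_kunz[of "f + m"] multiplicity_pos by simp
  moreover have "f div m < kunz S m (f mod m)"
    using frobenius_not_mem mem_iff_kunz[of f] by simp
  ultimately show ?thesis
    by simp
qed

lemma kunz_add_le: "r + s < m \<Longrightarrow> kunz S m (r + s) \<le> kunz S m r + kunz S m s"
  using add_mem[OF kunz_mem[of r] kunz_mem[of s]] by (intro kunz_le) (simp add: algebra_simps)

lemma kunz_mult_add_lt: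
  assumes "r < m" "r \<noteq> f mod m" shows "kunz S m r * m + r < f + m"
proof (cases "r = 0")
  case True
  then show ?thesis
    using kunz_zero multiplicity_pos by simp
next
  case False
  then obtain k where k: "kunz S m r = Suc k"
    using kunz_pos assms(1) gr0_implies_Suc by blast
  have "k * m + r \<notin> S"
    using mem_iff_kunz[of "k * m + r"] assms(1) k by simp
  then have "k * m + r \<le> f"
    using frobenius_less_imp_mem by (meson not_le)
  moreover have "k * m + r \<noteq> f"
  proof
    assume "k * m + r = f"
    then have "f mod m = r"
      using assms(1) by (metis mod_mult_self3 mod_less)
    then show False
      using assms(2) by simp
  qed
  ultimately show ?thesis
    using k by simp
qed

lemma frobenius_add_le_kunz_sum:
  assumes "r < m" "s < m" "(r + s) mod m = f mod m"
  shows "f + m \<le> kunz S m r * m + r + (kunz S m s * m + s)"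
proof -
  define x where "x = kunz S m r * m + r + (kunz S m s * m + s)"
  have "x \<in> S"
    unfolding x_def by (intro add_mem kunz_mem)
  moreover have "x mod m = f mod m"
  proof -
    have "x = (r + s) + (kunz S m r + kunz S m s) * m"
      unfolding x_def by (simp add: algebra_simps)
    then show ?thesis
      using assms(3) by simp
  qed
  ultimately have "f div m + 1 \<le> x div m"
    using mem_iff_kunz[of x] kunz_frobenius_mod by simp
  then have "f div m * m + m \<le> x div m * m"
    using mult_le_mono1[of "f div m + 1" "x div m" m] by simp
  then show ?thesis
    using div_mult_mod_eq[of f m] div_mult_mod_eq[of x m] \<open>x mod m = f mod m\<close>
    unfolding x_def by linarith
qed

end

section \<open>Pairing the residues modulo the multiplicity\<close>

definition free_residues :: "nat \<Rightarrow> nat \<Rightarrow> nat set" where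
  "free_residues f m = {r. 0 < r \<and> r < m \<and> r \<noteq> f mod m}"

(* r + partner f m r is congruent to f modulo m. *)
definition partner :: "nat \<Rightarrow> nat \<Rightarrow> nat \<Rightarrow> nat" where
  "partner f m r = (if r < f mod m then f mod m - r else f mod m + m - r)"

definition kunz_bound :: "nat \<Rightarrow> nat \<Rightarrow> nat \<Rightarrow> nat" where
  "kunz_bound f m r = (if r < f mod m then f div m + 1 else f div m)"

locale frobenius_residues =
  fixes f m :: nat
  assumes m_pos: "0 < m" and frobenius_mod_pos: "0 < f mod m"
begin

lemma finite_free_residues: "finite (free_residues f m)"
  unfolding free_residues_def by simp

lemma frobenius_mod_less: "f mod m < m"
  using m_pos by simp

lemma partner_mem: "r \<in> free_residues f m \<Longrightarrow> partner f m r \<in> free_residues f m"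
  using frobenius_mod_less unfolding free_residues_def partner_def by (cases "r < f mod m") auto

lemma partner_partner: "r \<in> free_residues f m \<Longrightarrow> partner f m (partner f m r) = r"
  using frobenius_mod_less unfolding free_residues_def partner_def by (cases "r < f mod m") auto

lemma partner_less_mod_iff:
  "r \<in> free_residues f m \<Longrightarrow> partner f m r < f mod m \<longleftrightarrow> r < f mod m"
  unfolding free_residues_def partner_def by auto

lemma kunz_bound_partner:
  "r \<in> free_residues f m \<Longrightarrow> kunz_bound f m (partner f m r) = kunz_bound f m r"
  using partner_less_mod_iff unfolding kunz_bound_def by simp

lemma add_partner:
  "r \<in> free_residues f m \<Longrightarrow>
    r + partner f m r = (if r < f mod m then f mod m else f mod m + m)"
  unfolding free_residues_def partner_def by auto

lemma kunz_bound_mult_add_partner: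
  assumes r: "r \<in> free_residues f m"
  shows "kunz_bound f m r * m + (r + partner f m r) = f + m"
proof -
  have "f div m * m + f mod m = f"
    by (rule div_mult_mod_eq)
  then show ?thesis
    unfolding add_partner[OF r] kunz_bound_def by (simp add: algebra_simps)
qed

lemma sum_kunz_bound_le: "(\<Sum>r\<in>free_residues f m. kunz_bound f m r) \<le> f"
proof -
  have "(\<Sum>r\<in>free_residues f m. kunz_bound f m r) \<le> (\<Sum>r<m. kunz_bound f m r)"
    by (rule sum_mono2) (auto simp: free_residues_def)
  also have "\<dots> = (\<Sum>r<m. f div m) + (\<Sum>r<m. if r < f mod m then 1 else 0)"
    unfolding kunz_bound_def sum.distrib[symmetric] by (rule sum.cong) auto
  also have "(\<Sum>r<m. if r < f mod m then 1 else 0) = card {r \<in> {..<m}. r < f mod m}"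
    by (simp add: sum.inter_filter[symmetric])
  also have "{r \<in> {..<m}. r < f mod m} = {..<f mod m}"
    using frobenius_mod_less by auto
  finally show ?thesis
    by (simp add: mult.commute)
qed

lemma card_free_residues: "card (free_residues f m) = m - 2"
proof -
  have "free_residues f m = {1..<m} - {f mod m}"
    unfolding free_residues_def by auto
  then show ?thesis
    using frobenius_mod_pos frobenius_mod_less by simp
qed

end

sublocale frobenius_semigroup \<subseteq> frobenius_residues
  using multiplicity_pos frobenius_mod_pos by unfold_locales

context frobenius_semigroup
begin

lemma kunz_le_kunz_bound:
  assumes r: "r \<in> free_residues f m" shows "kunz S m r \<le> kunz_bound f m r"
proof -
  have "partner f m r < m"
    using partner_mem[OF r] unfolding free_residues_def by simp
  moreover have "kunz S m r * m + r < kunz_bound f m r * m + (r + partner f m r)"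
    using kunz_mult_add_lt r kunz_bound_mult_add_partner[OF r]
    unfolding free_residues_def by simp
  ultimately have "kunz S m r * m < (kunz_bound f m r + 1) * m"
    by (simp add: algebra_simps)
  then show ?thesis
    by (simp only: mult_less_cancel2) simp
qed

lemma kunz_bound_le_add_partner:
  assumes r: "r \<in> free_residues f m"
  shows "kunz_bound f m r \<le> kunz S m r + kunz S m (partner f m r)"
proof -
  let ?s = "partner f m r"
  have "(r + ?s) mod m = f mod m"
    using kunz_bound_mult_add_partner[OF r] by (metis mod_mult_self3 mod_add_self2)
  then have "f + m \<le> kunz S m r * m + r + (kunz S m ?s * m + ?s)"
    using r partner_mem[OF r] by (intro frobenius_add_le_kunz_sum) (auto simp: free_residues_def)
  then have "kunz_bound f m r * m \<le> (kunz S m r + kunz S m ?s) * m"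
    using kunz_bound_mult_add_partner[OF r] by (simp add: algebra_simps)
  then show ?thesis
    using multiplicity_pos by simp
qed

lemma eq_if_kunz_eq:
  assumes S': "frobenius_semigroup S' f m"
    and eq: "\<And>r. r \<in> free_residues f m \<Longrightarrow> kunz S m r = kunz S' m r"
  shows "S = S'"
proof -
  interpret S': frobenius_semigroup S' f m
    by (rule S')
  have "kunz S m r = kunz S' m r" if "r < m" for r
    using eq[of r] that kunz_zero S'.kunz_zero kunz_frobenius_mod S'.kunz_frobenius_mod
    unfolding free_residues_def by (cases "r = 0 \<or> r = f mod m") auto
  then show ?thesis
    using mem_iff_kunz S'.mem_iff_kunz multiplicity_pos by auto
qed

end

definition semigroups_with :: "nat \<Rightarrow> nat \<Rightarrow> nat set set" where
  "semigroups_with f m = {S. frobenius_semigroup S f m}"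

lemma inj_on_restrict_kunz:
  assumes "free_residues f m \<subseteq> A"
  shows "inj_on (\<lambda>S. restrict (kunz S m) A) (semigroups_with f m)"
proof (rule inj_onI)
  fix S S' assume S: "S \<in> semigroups_with f m" and S': "S' \<in> semigroups_with f m"
    and eq: "restrict (kunz S m) A = restrict (kunz S' m) A"
  interpret S: frobenius_semigroup S f m
    using S unfolding semigroups_with_def by simp
  show "S = S'"
  proof (rule S.eq_if_kunz_eq)
    show "frobenius_semigroup S' f m"
      using S' unfolding semigroups_with_def by simp
    show "kunz S m r = kunz S' m r" if "r \<in> free_residues f m" for r
      using fun_cong[OF eq, of r] that assms by auto
  qed
qed

lemma card_semigroups_with_le_power: "card (semigroups_with f m) \<le> (f + 2) ^ m"
proof -
  have "card (semigroups_with f m) \<le> card ({..<m} \<rightarrow>\<^sub>E {..f + 1})"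
  proof (rule card_inj_on_le)
    show "inj_on (\<lambda>S. restrict (kunz S m) {..<m}) (semigroups_with f m)"
      by (rule inj_on_restrict_kunz) (auto simp: free_residues_def)
    show "(\<lambda>S. restrict (kunz S m) {..<m}) ` semigroups_with f m \<subseteq> {..<m} \<rightarrow>\<^sub>E {..f + 1}"
    proof
      fix g assume "g \<in> (\<lambda>S. restrict (kunz S m) {..<m}) ` semigroups_with f m"
      then obtain S where "frobenius_semigroup S f m" "g = restrict (kunz S m) {..<m}"
        unfolding semigroups_with_def by auto
      then show "g \<in> {..<m} \<rightarrow>\<^sub>E {..f + 1}"
        using frobenius_semigroup.kunz_le_Suc_frobenius by auto
    qed
  qed (simp add: finite_PiE)
  also have "\<dots> = (f + 2) ^ m"
    by (simp add: card_PiE)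
  finally show ?thesis .
qed

lemma card_semigroups_with_Suc_le: "card (semigroups_with f (f + 1)) \<le> 1"
proof -
  have "semigroups_with f (f + 1) \<subseteq> {{x. x = 0 \<or> f < x}}"
    using frobenius_semigroup.eq_if_multiplicity_Suc_frobenius
    unfolding semigroups_with_def by blast
  then show ?thesis
    using card_mono[of "{{x. x = 0 \<or> f < x}}"] by fastforce
qed

lemma finite_frobenius_semigroups: "finite {S. numerical_semigroup S \<and> frobenius S = int f}"
proof (rule inj_on_finite[where f = "\<lambda>S. S \<inter> {..f}" and B = "Pow {..f}"])
  show "inj_on (\<lambda>S. S \<inter> {..f}) {S. numerical_semigroup S \<and> frobenius S = int f}"
  proof (rule inj_onI)
    fix S S' assume S: "S \<in> {S. numerical_semigroup S \<and> frobenius S = int f}"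
      and S': "S' \<in> {S. numerical_semigroup S \<and> frobenius S = int f}"
      and eq: "S \<inter> {..f} = S' \<inter> {..f}"
    interpret S: frobenius_semigroup S f "multiplicity_ns S"
      using S by (simp add: frobenius_semigroup_def)
    interpret S': frobenius_semigroup S' f "multiplicity_ns S'"
      using S' by (simp add: frobenius_semigroup_def)
    show "S = S'"
    proof (rule set_eqI)
      fix x
      show "x \<in> S \<longleftrightarrow> x \<in> S'"
        using eq S.frobenius_less_imp_mem[of x] S'.frobenius_less_imp_mem[of x]
        by (cases "x \<le> f") auto
    qed
  qed
qed auto

(* If f div m = 3, a pair of residues above f mod m has bound 3 and admits 8 = 2^3 choices, so
   nothing is saved.  For the residues r selected here, the constraint kunz (2 r) <= 2 * kunz r
   cuts the 8 * 8 choices on the quadruple {r, partner r, 2 r, partner (2 r)} down to 58. *)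
definition doubling_residues :: "nat \<Rightarrow> nat \<Rightarrow> nat set" where
  "doubling_residues f m =
     (if f div m = 3 then {r. f mod m < r \<and> m < 8 * r \<and> 4 * r < m} else {})"

definition quad_block :: "nat \<Rightarrow> nat \<Rightarrow> nat \<Rightarrow> nat set" where
  "quad_block f m r = {r, partner f m r, 2 * r, partner f m (2 * r)}"

definition quad_residues :: "nat \<Rightarrow> nat \<Rightarrow> nat set" where
  "quad_residues f m = (\<Union>r\<in>doubling_residues f m. quad_block f m r)"

definition blocks :: "nat \<Rightarrow> nat \<Rightarrow> nat set set" where
  "blocks f m = quad_block f m ` doubling_residues f m \<union>
     (\<lambda>r. {r, partner f m r}) ` (free_residues f m - quad_residues f m)"

context frobenius_residues
begin

lemma doubling_residuesD:
  assumes "j \<in> doubling_residues f m"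
  shows "f div m = 3" "f mod m < j" "m < 8 * j" "4 * j < m"
    "partner f m j = f mod m + m - j" "partner f m (2 * j) = f mod m + m - 2 * j"
  using assms unfolding doubling_residues_def partner_def by (auto split: if_splits)

lemma quad_block_subset: "j \<in> doubling_residues f m \<Longrightarrow> quad_block f m j \<subseteq> free_residues f m"
  using doubling_residuesD[of j] frobenius_mod_less
  unfolding quad_block_def free_residues_def by auto

lemma partner_mem_quad_block:
  assumes j: "j \<in> doubling_residues f m" and r: "r \<in> quad_block f m j"
  shows "partner f m r \<in> quad_block f m j"
proof -
  have "j \<in> free_residues f m" "2 * j \<in> free_residues f m"
    using quad_block_subset[OF j] unfolding quad_block_def by auto
  then show ?thesis
    using r partner_partner unfolding quad_block_def by auto
qed

lemma quad_blocks_disjoint: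
  assumes j: "j \<in> doubling_residues f m" and j': "j' \<in> doubling_residues f m" and "j \<noteq> j'"
  shows "quad_block f m j \<inter> quad_block f m j' = {}"
proof -
  note d = doubling_residuesD[OF j] and d' = doubling_residuesD[OF j']
  show ?thesis
    unfolding quad_block_def d(5,6) d'(5,6) using d(1-4) d'(1-4) \<open>j \<noteq> j'\<close> by auto
qed

lemma partner_mem_quad_residues: "r \<in> quad_residues f m \<Longrightarrow> partner f m r \<in> quad_residues f m"
  unfolding quad_residues_def using partner_mem_quad_block by blast

lemma pair_disjoint_quad_residues:
  assumes "r \<in> free_residues f m - quad_residues f m"
  shows "{r, partner f m r} \<inter> quad_residues f m = {}"
proof -
  have "partner f m r \<notin> quad_residues f m"
  proof
    assume "partner f m r \<in> quad_residues f m"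
    then have "partner f m (partner f m r) \<in> quad_residues f m"
      by (rule partner_mem_quad_residues)
    then show False
      using assms partner_partner by simp
  qed
  then show ?thesis
    using assms by simp
qed

lemma pair_block_eq:
  "r \<in> free_residues f m \<Longrightarrow> x \<in> {r, partner f m r} \<Longrightarrow> {x, partner f m x} = {r, partner f m r}"
  using partner_partner by auto

lemma blocks_subset: "B \<in> blocks f m \<Longrightarrow> B \<subseteq> free_residues f m"
  unfolding blocks_def using quad_block_subset partner_mem by auto

lemma partner_mem_block: "B \<in> blocks f m \<Longrightarrow> r \<in> B \<Longrightarrow> partner f m r \<in> B"
  unfolding blocks_def using partner_mem_quad_block partner_partner by auto

lemma doubling_residues_subset: "doubling_residues f m \<subseteq> free_residues f m"
  using quad_block_subset unfolding quad_block_def by blast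

lemma finite_blocks: "finite (blocks f m)"
  unfolding blocks_def
  using finite_subset[OF doubling_residues_subset finite_free_residues] finite_free_residues by simp

lemma finite_block: "B \<in> blocks f m \<Longrightarrow> finite B"
  using blocks_subset finite_free_residues by (rule finite_subset)

lemma block_eq_quad_block:
  assumes B: "B \<in> blocks f m" and x: "x \<in> B" "x \<in> quad_block f m j"
    and j: "j \<in> doubling_residues f m"
  shows "B = quad_block f m j"
proof -
  have "x \<in> quad_residues f m"
    using x(2) j unfolding quad_residues_def by blast
  then show ?thesis
    using B x quad_blocks_disjoint[OF j] pair_disjoint_quad_residues unfolding blocks_def by blast
qed

lemma block_eq_pair:
  assumes B: "B \<in> blocks f m" and x: "x \<in> B" "x \<notin> quad_residues f m"
  shows "B = {x, partner f m x}"
  using B x pair_block_eq unfolding blocks_def quad_residues_def by auto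

lemma blocks_partition: "partition_on (free_residues f m) (blocks f m)"
proof (rule partition_onI)
  show "\<Union>(blocks f m) = free_residues f m"
  proof
    show "\<Union>(blocks f m) \<subseteq> free_residues f m"
      using blocks_subset by blast
    show "free_residues f m \<subseteq> \<Union>(blocks f m)"
      unfolding blocks_def quad_residues_def by blast
  qed
next
  fix B B' assume B: "B \<in> blocks f m" and B': "B' \<in> blocks f m" and "B \<noteq> B'"
  have "B = B'" if "x \<in> B" "x \<in> B'" for x
  proof (cases "x \<in> quad_residues f m")
    case True
    then obtain j where "j \<in> doubling_residues f m" "x \<in> quad_block f m j"
      unfolding quad_residues_def by blast
    then show ?thesis
      using block_eq_quad_block B B' that by metis
  next
    case False
    then show ?thesis
      using block_eq_pair B B' that by metis
  qed
  then show "disjnt B B'"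
    using \<open>B \<noteq> B'\<close> by (auto simp: disjnt_def)
next
  show "{} \<notin> blocks f m"
    unfolding blocks_def quad_block_def by auto
qed

end

section \<open>Counting Kunz coordinates block by block\<close>

lemma card_le_prod_card_restrict:
  fixes h :: "'a \<Rightarrow> 'b \<Rightarrow> 'c"
  assumes P: "finite P" and C: "\<And>B. B \<in> P \<Longrightarrow> finite (C B)"
    and inj: "inj_on (\<lambda>x. restrict (h x) (\<Union>P)) X"
    and mem: "\<And>x B. x \<in> X \<Longrightarrow> B \<in> P \<Longrightarrow> restrict (h x) B \<in> C B"
  shows "card X \<le> (\<Prod>B\<in>P. card (C B))"
proof -
  define F where "F x = (\<lambda>B\<in>P. restrict (h x) B)" for x
  have "inj_on F X"
  proof (rule inj_onI)
    fix x y assume "x \<in> X" "y \<in> X" "F x = F y"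
    moreover have "h x a = h y a" if "B \<in> P" "a \<in> B" for B a
      using fun_cong[OF fun_cong[OF \<open>F x = F y\<close>, of B], of a] that unfolding F_def by simp
    then have "restrict (h x) (\<Union>P) = restrict (h y) (\<Union>P)"
      by (auto intro: restrict_ext)
    ultimately show "x = y"
      using inj by (auto dest: inj_onD)
  qed
  moreover have "F ` X \<subseteq> PiE P C"
    using mem unfolding F_def by auto
  ultimately have "card X \<le> card (PiE P C)"
    using P C by (intro card_inj_on_le) (auto intro: finite_PiE)
  also have "\<dots> = (\<Prod>B\<in>P. card (C B))"
    by (rule card_PiE[OF P])
  finally show ?thesis .
qed

definition admissible :: "nat \<Rightarrow> nat \<Rightarrow> nat set \<Rightarrow> (nat \<Rightarrow> nat) set" where
  "admissible f m B = {g \<in> B \<rightarrow>\<^sub>E UNIV. \<forall>r\<in>B. 0 < g r \<and> g r \<le> kunz_bound f m r \<and>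
     kunz_bound f m r \<le> g r + g (partner f m r) \<and> (2 * r \<in> B \<longrightarrow> g (2 * r) \<le> 2 * g r)}"

lemma finite_admissible: "finite B \<Longrightarrow> finite (admissible f m B)"
proof (rule finite_subset)
  show "admissible f m B \<subseteq> B \<rightarrow>\<^sub>E {..f div m + 1}"
    unfolding admissible_def kunz_bound_def by (auto split: if_splits)
  show "finite B \<Longrightarrow> finite (B \<rightarrow>\<^sub>E {..f div m + 1})"
    by (simp add: finite_PiE)
qed

lemma admissibleD:
  assumes "g \<in> admissible f m B" "r \<in> B"
  shows "0 < g r" "g r \<le> kunz_bound f m r" "kunz_bound f m r \<le> g r + g (partner f m r)"
    "2 * r \<in> B \<Longrightarrow> g (2 * r) \<le> 2 * g r"
  using assms unfolding admissible_def by auto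

lemma admissible_eqI:
  "g \<in> admissible f m B \<Longrightarrow> g' \<in> admissible f m B \<Longrightarrow> (\<And>r. r \<in> B \<Longrightarrow> g r = g' r) \<Longrightarrow> g = g'"
  unfolding admissible_def by (auto intro: PiE_ext)

lemma (in frobenius_semigroup) kunz_admissible:
  assumes B: "B \<in> blocks f m" shows "restrict (kunz S m) B \<in> admissible f m B"
proof -
  have "0 < kunz S m r \<and> kunz S m r \<le> kunz_bound f m r \<and>
      kunz_bound f m r \<le> kunz S m r + kunz S m (partner f m r) \<and>
      (2 * r \<in> B \<longrightarrow> kunz S m (2 * r) \<le> 2 * kunz S m r)" if r: "r \<in> B" for r
  proof -
    have "r \<in> free_residues f m" and "2 * r \<in> B \<Longrightarrow> r + r < m"
      using blocks_subset[OF B] r unfolding free_residues_def by auto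
    then show ?thesis
      using kunz_pos kunz_le_kunz_bound kunz_bound_le_add_partner kunz_add_le[of r r]
      unfolding free_residues_def by (auto simp: mult_2)
  qed
  then show ?thesis
    unfolding admissible_def using partner_mem_block[OF B] by auto
qed

lemma (in frobenius_residues) card_semigroups_with_le_prod:
  "card (semigroups_with f m) \<le> (\<Prod>B\<in>blocks f m. card (admissible f m B))"
proof (rule card_le_prod_card_restrict)
  show "inj_on (\<lambda>S. restrict (kunz S m) (\<Union>(blocks f m))) (semigroups_with f m)"
    using partition_onD1[OF blocks_partition] by (intro inj_on_restrict_kunz) simp
qed (use finite_blocks finite_block finite_admissible frobenius_semigroup.kunz_admissible
      in \<open>auto simp: semigroups_with_def\<close>)

definition pair_choices :: "nat \<Rightarrow> (nat \<times> nat) set" where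
  "pair_choices P = {(a, b). 0 < a \<and> a \<le> P \<and> 0 < b \<and> b \<le> P \<and> P \<le> a + b}"

definition self_choices :: "nat \<Rightarrow> nat set" where
  "self_choices P = {a. 0 < a \<and> a \<le> P \<and> P \<le> 2 * a}"

definition quad_choices :: "(nat \<times> nat \<times> nat \<times> nat) set" where
  "quad_choices = {(a, b, c, d). (a, b) \<in> pair_choices 3 \<and> (c, d) \<in> pair_choices 3 \<and> c \<le> 2 * a}"

lemma pair_choices_eq: "pair_choices P = Set.filter (\<lambda>(a, b). P \<le> a + b) ({1..P} \<times> {1..P})"
  unfolding pair_choices_def by auto

lemma finite_pair_choices: "finite (pair_choices P)"
  unfolding pair_choices_eq by simp

lemma card_pair_choices_le: "card (pair_choices P) \<le> P * P"
proof -
  have "card (pair_choices P) \<le> card ({1..P} \<times> {1..P})"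
    unfolding pair_choices_eq by (rule card_mono) auto
  then show ?thesis
    by simp
qed

lemma card_pair_choices_3: "card (pair_choices 3) = 8"
  unfolding pair_choices_eq by code_simp

lemma card_pair_choices_4: "card (pair_choices 4) = 13"
  unfolding pair_choices_eq by code_simp

lemma finite_self_choices: "finite (self_choices P)"
  unfolding self_choices_def by simp

lemma card_self_choices_le: "card (self_choices P) \<le> P div 2 + 1"
proof -
  have "self_choices P \<subseteq> {P - P div 2..P}"
    unfolding self_choices_def by auto
  then have "card (self_choices P) \<le> card {P - P div 2..P}"
    by (intro card_mono) auto
  then show ?thesis
    by simp
qed

lemma finite_quad_choices: "finite quad_choices"
proof (rule finite_subset)
  show "quad_choices \<subseteq> {1..3} \<times> {1..3} \<times> {1..3} \<times> {1..3}"
    unfolding quad_choices_def pair_choices_def by auto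
qed simp

lemma card_quad_choices: "card quad_choices = 58"
proof -
  have eq: "quad_choices = Set.filter
      (\<lambda>(a, b, c, d). (a, b) \<in> pair_choices 3 \<and> (c, d) \<in> pair_choices 3 \<and> c \<le> 2 * a)
      ({1..3} \<times> {1..3} \<times> {1..3} \<times> {1..3})"
    unfolding quad_choices_def pair_choices_def by auto
  show ?thesis
    unfolding eq pair_choices_eq by code_simp
qed

lemma fourth_power_le_four_power: "5 \<le> n \<Longrightarrow> 100 * n ^ 4 \<le> 81 * 4 ^ n"
proof (induction n rule: dec_induct)
  case (step k)
  have "(5 * Suc k) ^ 4 \<le> (6 * k) ^ 4"
    using step.hyps by (intro power_mono) simp_all
  then have "625 * Suc k ^ 4 \<le> 1296 * k ^ 4"
    by (simp only: power_mult_distrib) simp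
  then show ?case
    using step.IH by simp
qed simp

lemma square_le_two_power: "4 \<le> n \<Longrightarrow> 10 * (n div 2 + 1)\<^sup>2 \<le> 9 * 2 ^ n"
proof (induction n rule: dec_induct)
  case (step k)
  have "2 * 2 \<le> k div 2 * (k div 2)"
    using step.hyps by (intro mult_le_mono) presburger+
  have "(Suc k div 2 + 1)\<^sup>2 \<le> (k div 2 + 2)\<^sup>2"
    by (intro power_mono) simp_all
  also have "\<dots> \<le> 2 * (k div 2 + 1)\<^sup>2"
    using \<open>2 * 2 \<le> k div 2 * (k div 2)\<close> by (simp add: power2_eq_square algebra_simps)
  finally show ?case
    using step.IH by simp
qed simp

lemma card_pair_choices_sq_le:
  assumes "4 \<le> P" shows "100 * (card (pair_choices P))\<^sup>2 \<le> 81 * 4 ^ P"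
proof (cases "P = 4")
  case False
  have "(card (pair_choices P))\<^sup>2 \<le> (P * P)\<^sup>2"
    by (rule power_mono[OF card_pair_choices_le]) simp
  then have "100 * (card (pair_choices P))\<^sup>2 \<le> 100 * P ^ 4"
    by (simp add: power2_eq_square power4_eq_xxxx mult.assoc)
  also have "\<dots> \<le> 81 * 4 ^ P"
    using False assms by (intro fourth_power_le_four_power) simp
  finally show ?thesis .
qed (simp add: card_pair_choices_4)

lemma card_self_choices_sq_le:
  assumes "4 \<le> P" shows "10 * (card (self_choices P))\<^sup>2 \<le> 9 * 2 ^ P"
proof -
  have "(card (self_choices P))\<^sup>2 \<le> (P div 2 + 1)\<^sup>2"
    by (rule power_mono[OF card_self_choices_le]) simp
  then show ?thesis
    using square_le_two_power[OF assms] by linarith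
qed

(* On each block, the squared number of admissible coordinates falls short of 2 to the sum of the
   bounds by a factor 9/10 per saving residue. *)
definition saving_residues :: "nat \<Rightarrow> nat \<Rightarrow> nat set" where
  "saving_residues f m = {r \<in> free_residues f m. 4 \<le> kunz_bound f m r} \<union> doubling_residues f m"

context frobenius_residues
begin

lemma card_admissible_pair_le:
  assumes r: "r \<in> free_residues f m"
  shows "card (admissible f m {r, partner f m r}) \<le> card (pair_choices (kunz_bound f m r))"
proof (rule card_inj_on_le[OF _ _ finite_pair_choices])
  show "inj_on (\<lambda>g. (g r, g (partner f m r))) (admissible f m {r, partner f m r})"
    by (rule inj_onI, rule admissible_eqI) auto
  show "(\<lambda>g. (g r, g (partner f m r))) ` admissible f m {r, partner f m r}
      \<subseteq> pair_choices (kunz_bound f m r)"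
  proof
    fix x assume "x \<in> (\<lambda>g. (g r, g (partner f m r))) ` admissible f m {r, partner f m r}"
    then obtain g where g: "g \<in> admissible f m {r, partner f m r}"
      and x: "x = (g r, g (partner f m r))"
      by blast
    have mem: "r \<in> {r, partner f m r}" "partner f m r \<in> {r, partner f m r}"
      by simp_all
    show "x \<in> pair_choices (kunz_bound f m r)"
      unfolding x pair_choices_def
      using admissibleD[OF g mem(1)] admissibleD[OF g mem(2)] kunz_bound_partner[OF r] by simp
  qed
qed

lemma card_admissible_self_le:
  assumes "partner f m r = r"
  shows "card (admissible f m {r}) \<le> card (self_choices (kunz_bound f m r))"
proof (rule card_inj_on_le[OF _ _ finite_self_choices])
  show "inj_on (\<lambda>g. g r) (admissible f m {r})"
    by (rule inj_onI, rule admissible_eqI) auto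
  show "(\<lambda>g. g r) ` admissible f m {r} \<subseteq> self_choices (kunz_bound f m r)"
    using admissibleD[of _ f m "{r}" r] assms unfolding self_choices_def by fastforce
qed

lemma kunz_bound_quad_block:
  "j \<in> doubling_residues f m \<Longrightarrow> r \<in> quad_block f m j \<Longrightarrow> kunz_bound f m r = 3"
  using doubling_residuesD[of j] unfolding quad_block_def kunz_bound_def by auto

lemma card_admissible_quad_le:
  assumes j: "j \<in> doubling_residues f m"
  shows "card (admissible f m (quad_block f m j)) \<le> card quad_choices"
proof (rule card_inj_on_le[OF _ _ finite_quad_choices])
  let ?e = "\<lambda>g. (g j, g (partner f m j), g (2 * j), g (partner f m (2 * j)))"
  have mem: "j \<in> quad_block f m j" "partner f m j \<in> quad_block f m j"
    "2 * j \<in> quad_block f m j" "partner f m (2 * j) \<in> quad_block f m j"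
    unfolding quad_block_def by simp_all
  show "inj_on ?e (admissible f m (quad_block f m j))"
    by (rule inj_onI, rule admissible_eqI) (auto simp: quad_block_def)
  show "?e ` admissible f m (quad_block f m j) \<subseteq> quad_choices"
  proof
    fix x assume "x \<in> ?e ` admissible f m (quad_block f m j)"
    then obtain g where g: "g \<in> admissible f m (quad_block f m j)" and x: "x = ?e g"
      by blast
    show "x \<in> quad_choices"
      unfolding x quad_choices_def pair_choices_def
      using admissibleD[OF g mem(1)] admissibleD[OF g mem(2)] admissibleD[OF g mem(3)]
        admissibleD[OF g mem(4)] kunz_bound_quad_block[OF j] mem by simp
  qed
qed

lemma interval_subset_doubling_residues:
  assumes "f div m = 3" "8 * (f mod m) < m"
  shows "{m div 8 + 1..<(m + 3) div 4} \<subseteq> doubling_residues f m"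
proof
  fix r assume "r \<in> {m div 8 + 1..<(m + 3) div 4}"
  then have r: "m div 8 < r" "r < (m + 3) div 4"
    by auto
  have "f mod m \<le> m div 8"
    using assms(2) by (simp add: less_eq_div_iff_mult_less_eq)
  moreover have "m < 8 * r"
    using r(1) by (simp add: div_less_iff_less_mult mult.commute)
  moreover have "4 * r < m"
    using r(2) less_eq_div_iff_mult_less_eq[of 4 "r + 1" "m + 3"] by simp
  ultimately show "r \<in> doubling_residues f m"
    unfolding doubling_residues_def using assms(1) r(1) by simp
qed

lemma saving_residues_subset: "saving_residues f m \<subseteq> free_residues f m"
  unfolding saving_residues_def using doubling_residues_subset by blast

lemma pair_inter_saving_residues:
  assumes r: "r \<in> free_residues f m - quad_residues f m"
  shows "{r, partner f m r} \<inter> saving_residues f m =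
    (if 4 \<le> kunz_bound f m r then {r, partner f m r} else {})"
proof -
  have "{r, partner f m r} \<inter> doubling_residues f m = {}"
    using pair_disjoint_quad_residues[OF r] unfolding quad_residues_def quad_block_def by blast
  then show ?thesis
    using r partner_mem kunz_bound_partner unfolding saving_residues_def by auto
qed

lemma quad_block_inter_saving_residues:
  assumes j: "j \<in> doubling_residues f m"
  shows "quad_block f m j \<inter> saving_residues f m = {j}"
proof -
  have "x = j" if x: "x \<in> quad_block f m j" "x \<in> doubling_residues f m" for x
  proof (rule ccontr)
    assume "x \<noteq> j"
    then have "quad_block f m j \<inter> quad_block f m x = {}"
      using quad_blocks_disjoint[OF j x(2)] by simp
    moreover have "x \<in> quad_block f m x"
      unfolding quad_block_def by simp
    ultimately show False
      using x(1) by blast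
  qed
  moreover have "j \<in> quad_block f m j"
    unfolding quad_block_def by simp
  ultimately have "quad_block f m j \<inter> doubling_residues f m = {j}"
    using j by blast
  then show ?thesis
    using kunz_bound_quad_block[OF j] unfolding saving_residues_def by auto
qed

lemma card_quad_block:
  assumes j: "j \<in> doubling_residues f m" shows "card (quad_block f m j) = 4"
proof -
  note d = doubling_residuesD[OF j]
  have "j \<noteq> partner f m j" "j \<noteq> 2 * j" "j \<noteq> partner f m (2 * j)"
    "partner f m j \<noteq> 2 * j" "partner f m j \<noteq> partner f m (2 * j)" "2 * j \<noteq> partner f m (2 * j)"
    unfolding d(5,6) using d(2-4) by arith+
  then show ?thesis
    unfolding quad_block_def by simp
qed

end

locale deep_frobenius_residues = frobenius_residues +
  assumes three_le_div: "3 \<le> f div m"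
begin

lemma three_le_kunz_bound: "3 \<le> kunz_bound f m r"
  using three_le_div unfolding kunz_bound_def by simp

lemma quad_block_weight:
  assumes j: "j \<in> doubling_residues f m"
  defines "B \<equiv> quad_block f m j"
  shows "10 ^ card (B \<inter> saving_residues f m) * (card (admissible f m B))\<^sup>2
    \<le> 2 ^ (\<Sum>r\<in>B. kunz_bound f m r) * 9 ^ card (B \<inter> saving_residues f m)"
proof -
  have "(\<Sum>r\<in>B. kunz_bound f m r) = (\<Sum>r\<in>B. 3)"
    unfolding B_def using kunz_bound_quad_block[OF j] by (rule sum.cong[OF refl])
  then have "(\<Sum>r\<in>B. kunz_bound f m r) = 12"
    using card_quad_block[OF j] unfolding B_def by simp
  moreover have "(card (admissible f m B))\<^sup>2 \<le> 58\<^sup>2"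
    unfolding B_def using card_admissible_quad_le[OF j] card_quad_choices
    by (intro power_mono) simp_all
  ultimately show ?thesis
    using quad_block_inter_saving_residues[OF j] unfolding B_def by simp
qed

lemma pair_block_weight:
  assumes r: "r \<in> free_residues f m - quad_residues f m" and ne: "partner f m r \<noteq> r"
  defines "B \<equiv> {r, partner f m r}"
  shows "10 ^ card (B \<inter> saving_residues f m) * (card (admissible f m B))\<^sup>2
    \<le> 2 ^ (\<Sum>x\<in>B. kunz_bound f m x) * 9 ^ card (B \<inter> saving_residues f m)"
proof -
  let ?P = "kunz_bound f m r"
  have sum: "(\<Sum>x\<in>B. kunz_bound f m x) = 2 * ?P"
    using ne kunz_bound_partner r unfolding B_def by simp
  have card: "(card (admissible f m B))\<^sup>2 \<le> (card (pair_choices ?P))\<^sup>2"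
    unfolding B_def using r by (intro power_mono card_admissible_pair_le) auto
  show ?thesis
  proof (cases "4 \<le> ?P")
    case True
    then have "B \<inter> saving_residues f m = B" "card B = 2"
      using pair_inter_saving_residues[OF r] ne unfolding B_def by auto
    moreover have "100 * (card (admissible f m B))\<^sup>2 \<le> 81 * 4 ^ ?P"
      using card card_pair_choices_sq_le[OF True] by linarith
    ultimately show ?thesis
      using sum by (simp add: power_mult)
  next
    case False
    then have "B \<inter> saving_residues f m = {}" "?P = 3"
      using pair_inter_saving_residues[OF r] three_le_kunz_bound[of r] unfolding B_def by auto
    then show ?thesis
      using sum card card_pair_choices_3 by simp
  qed
qed

lemma self_block_weight:
  assumes r: "r \<in> free_residues f m - quad_residues f m" and eq: "partner f m r = r"
  shows "10 ^ card ({r} \<inter> saving_residues f m) * (card (admissible f m {r}))\<^sup>2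
    \<le> 2 ^ kunz_bound f m r * 9 ^ card ({r} \<inter> saving_residues f m)"
proof -
  let ?P = "kunz_bound f m r"
  have card: "(card (admissible f m {r}))\<^sup>2 \<le> (card (self_choices ?P))\<^sup>2"
    using eq by (intro power_mono card_admissible_self_le) auto
  show ?thesis
  proof (cases "4 \<le> ?P")
    case True
    then have "{r} \<inter> saving_residues f m = {r}"
      using pair_inter_saving_residues[OF r] eq by auto
    moreover have "10 * (card (admissible f m {r}))\<^sup>2 \<le> 9 * 2 ^ ?P"
      using card card_self_choices_sq_le[OF True] by linarith
    ultimately show ?thesis
      by simp
  next
    case False
    then have "{r} \<inter> saving_residues f m = {}" "?P = 3"
      using pair_inter_saving_residues[OF r] eq three_le_kunz_bound[of r] by auto
    moreover have "(card (admissible f m {r}))\<^sup>2 \<le> 2\<^sup>2"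
      using card_admissible_self_le[OF eq] card_self_choices_le[of 3] \<open>?P = 3\<close>
      by (intro power_mono) simp_all
    ultimately show ?thesis
      by simp
  qed
qed

lemma block_weight:
  assumes B: "B \<in> blocks f m"
  shows "10 ^ card (B \<inter> saving_residues f m) * (card (admissible f m B))\<^sup>2
    \<le> 2 ^ (\<Sum>r\<in>B. kunz_bound f m r) * 9 ^ card (B \<inter> saving_residues f m)"
proof -
  consider (quad) j where "j \<in> doubling_residues f m" "B = quad_block f m j"
    | (pair) r where "r \<in> free_residues f m - quad_residues f m" "B = {r, partner f m r}"
    using B unfolding blocks_def by blast
  then show ?thesis
  proof cases
    case quad
    then show ?thesis
      using quad_block_weight by simp
  next
    case pair
    then show ?thesis
      using self_block_weight[OF pair(1)] pair_block_weight[OF pair(1)]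
      by (cases "partner f m r = r") simp_all
  qed
qed

lemma prod_block_weight:
  "10 ^ card (saving_residues f m) * (\<Prod>B\<in>blocks f m. card (admissible f m B))\<^sup>2
    \<le> 2 ^ (\<Sum>r\<in>free_residues f m. kunz_bound f m r) * 9 ^ card (saving_residues f m)"
proof -
  have union: "\<Union>(blocks f m) = free_residues f m" and disj: "disjoint (blocks f m)"
    using blocks_partition unfolding partition_on_def by auto
  have card_saving: "card (saving_residues f m) = (\<Sum>B\<in>blocks f m. card (B \<inter> saving_residues f m))"
  proof -
    have "saving_residues f m = (\<Union>B\<in>blocks f m. B \<inter> saving_residues f m)"
      using saving_residues_subset union by blast
    also have "card \<dots> = (\<Sum>B\<in>blocks f m. card (B \<inter> saving_residues f m))"
      using finite_blocks finite_block disjointD[OF disj] by (intro card_UN_disjoint) auto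
    finally show ?thesis .
  qed
  have sum_bound: "(\<Sum>r\<in>free_residues f m. kunz_bound f m r)
      = (\<Sum>B\<in>blocks f m. \<Sum>r\<in>B. kunz_bound f m r)"
    unfolding union[symmetric] using finite_block disjointD[OF disj]
    by (subst sum.Union_disjoint) auto
  have "10 ^ card (saving_residues f m) * (\<Prod>B\<in>blocks f m. card (admissible f m B))\<^sup>2
      = (\<Prod>B\<in>blocks f m. 10 ^ card (B \<inter> saving_residues f m) * (card (admissible f m B))\<^sup>2)"
    unfolding card_saving power_sum prod_power_distrib prod.distrib by simp
  also have "\<dots> \<le> (\<Prod>B\<in>blocks f m. 2 ^ (\<Sum>r\<in>B. kunz_bound f m r) * 9 ^ card (B \<inter> saving_residues f m))"
    using block_weight by (intro prod_mono) auto
  also have "\<dots> = 2 ^ (\<Sum>r\<in>free_residues f m. kunz_bound f m r) * 9 ^ card (saving_residues f m)"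
    unfolding card_saving sum_bound power_sum prod.distrib by simp
  finally show ?thesis .
qed

lemma multiplicity_le_card_saving_residues: "m \<le> 8 * card (saving_residues f m) + 16"
proof -
  have fin: "finite (saving_residues f m)"
    using saving_residues_subset finite_free_residues by (rule finite_subset)
  consider "4 \<le> f div m" | "f div m = 3" "m \<le> 8 * (f mod m)" | "f div m = 3" "8 * (f mod m) < m"
    using three_le_div by linarith
  then show ?thesis
  proof cases
    case 1
    then have "free_residues f m \<subseteq> saving_residues f m"
      unfolding saving_residues_def kunz_bound_def by auto
    then have "card (free_residues f m) \<le> card (saving_residues f m)"
      by (rule card_mono[OF fin])
    then show ?thesis
      using card_free_residues by linarith
  next
    case 2
    then have "{1..<f mod m} \<subseteq> saving_residues f m"
      using frobenius_mod_less
      unfolding saving_residues_def free_residues_def kunz_bound_def by auto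
    then have "card {1..<f mod m} \<le> card (saving_residues f m)"
      by (rule card_mono[OF fin])
    then show ?thesis
      using 2(2) by simp
  next
    case 3
    then have "{m div 8 + 1..<(m + 3) div 4} \<subseteq> doubling_residues f m"
      by (rule interval_subset_doubling_residues)
    then have "{m div 8 + 1..<(m + 3) div 4} \<subseteq> saving_residues f m"
      unfolding saving_residues_def by blast
    then have "card {m div 8 + 1..<(m + 3) div 4} \<le> card (saving_residues f m)"
      by (rule card_mono[OF fin])
    moreover have "m \<le> 8 * card {m div 8 + 1..<(m + 3) div 4} + 16"
      by simp
    ultimately show ?thesis
      by linarith
  qed
qed

lemma semigroups_with_weight:
  "10 ^ card (saving_residues f m) * (card (semigroups_with f m))\<^sup>2
    \<le> 2 ^ f * 9 ^ card (saving_residues f m)"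
proof -
  have "(card (semigroups_with f m))\<^sup>2 \<le> (\<Prod>B\<in>blocks f m. card (admissible f m B))\<^sup>2"
    using card_semigroups_with_le_prod by (rule power_mono) simp
  then have "10 ^ card (saving_residues f m) * (card (semigroups_with f m))\<^sup>2
      \<le> 10 ^ card (saving_residues f m) * (\<Prod>B\<in>blocks f m. card (admissible f m B))\<^sup>2"
    by (rule mult_le_mono2)
  also have "\<dots> \<le> 2 ^ (\<Sum>r\<in>free_residues f m. kunz_bound f m r) * 9 ^ card (saving_residues f m)"
    by (rule prod_block_weight)
  also have "\<dots> \<le> 2 ^ f * 9 ^ card (saving_residues f m)"
    using sum_kunz_bound_le by (simp add: power_increasing)
  finally show ?thesis .
qed

end

lemma card_semigroups_with_sq_le:
  assumes "0 < m" "3 \<le> f div m"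
  shows "\<exists>s. m \<le> 8 * s + 16 \<and> 10 ^ s * (card (semigroups_with f m))\<^sup>2 \<le> 2 ^ f * 9 ^ s"
proof (cases "semigroups_with f m = {}")
  case True
  then show ?thesis
    by (intro exI[of _ m]) simp
next
  case False
  then obtain S where "frobenius_semigroup S f m"
    unfolding semigroups_with_def by auto
  then interpret S: frobenius_semigroup S f m .
  interpret deep_frobenius_residues f m
    using assms S.frobenius_mod_pos by unfold_locales simp_all
  show ?thesis
    using semigroups_with_weight multiplicity_le_card_saving_residues by blast
qed

section \<open>Depth and the asymptotic count\<close>

definition other_depth :: "nat \<Rightarrow> nat set set" where
  "other_depth f = {S. numerical_semigroup S \<and> frobenius S = int f \<and> depth S \<notin> {2, 3}}"

lemma Fr_eq: "Fr f = Fr_depth 2 f + Fr_depth 3 f + card (other_depth f)"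
proof -
  define D where "D P = {S. numerical_semigroup S \<and> frobenius S = int f \<and> P (depth S)}" for P
  have fin: "finite (D P)" for P
    using finite_frobenius_semigroups unfolding D_def by (rule finite_subset[rotated]) auto
  have "card ((D (\<lambda>d. d = 2) \<union> D (\<lambda>d. d = 3)) \<union> D (\<lambda>d. d \<notin> {2, 3}))
      = card (D (\<lambda>d. d = 2) \<union> D (\<lambda>d. d = 3)) + card (D (\<lambda>d. d \<notin> {2, 3}))"
    using fin by (intro card_Un_disjoint) (auto simp: D_def)
  also have "card (D (\<lambda>d. d = 2) \<union> D (\<lambda>d. d = 3)) = card (D (\<lambda>d. d = 2)) + card (D (\<lambda>d. d = 3))"
    using fin by (intro card_Un_disjoint) (auto simp: D_def)
  also have "(D (\<lambda>d. d = 2) \<union> D (\<lambda>d. d = 3)) \<union> D (\<lambda>d. d \<notin> {2, 3})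
      = {S. numerical_semigroup S \<and> frobenius S = int f}"
    unfolding D_def by auto
  finally show ?thesis
    unfolding Fr_def Fr_depth_def other_depth_def D_def by simp
qed

definition deep_multiplicities :: "nat \<Rightarrow> nat set" where
  "deep_multiplicities f = {m. 0 < m \<and> 3 \<le> f div m}"

lemma deep_multiplicities_subset: "deep_multiplicities f \<subseteq> {1..f}"
  unfolding deep_multiplicities_def by (auto intro: ccontr)

lemma card_other_depth_le:
  "card (other_depth f) \<le> 1 + (\<Sum>m\<in>deep_multiplicities f. card (semigroups_with f m))"
proof -
  let ?U = "\<Union>m\<in>deep_multiplicities f. semigroups_with f m"
  have fin: "finite (deep_multiplicities f)"
    using deep_multiplicities_subset by (rule finite_subset) simp
  have fin_with: "finite (semigroups_with f m)" for m
    using finite_frobenius_semigroups[of f]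
    by (rule finite_subset[rotated]) (auto simp: semigroups_with_def frobenius_semigroup_def)
  have "other_depth f \<subseteq> semigroups_with f (f + 1) \<union> ?U"
  proof
    fix S assume "S \<in> other_depth f"
    then have S: "frobenius_semigroup S f (multiplicity_ns S)" and d: "depth S \<notin> {2, 3}"
      unfolding other_depth_def frobenius_semigroup_def by auto
    interpret frobenius_semigroup S f "multiplicity_ns S"
      by (rule S)
    consider "depth S \<le> 1" | "4 \<le> depth S"
      using d by fastforce
    then show "S \<in> semigroups_with f (f + 1) \<union> ?U"
    proof cases
      case 1
      then have "multiplicity_ns S = f + 1"
        by (rule multiplicity_eq_if_depth_le_1)
      then show ?thesis
        using S unfolding semigroups_with_def by simp
    next
      case 2
      then have "multiplicity_ns S \<in> deep_multiplicities f"
        using three_le_div_if_four_le_depth multiplicity_pos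
        unfolding deep_multiplicities_def by simp
      then show ?thesis
        using S unfolding semigroups_with_def by blast
    qed
  qed
  then have "card (other_depth f) \<le> card (semigroups_with f (f + 1) \<union> ?U)"
    using fin fin_with by (intro card_mono) auto
  also have "\<dots> \<le> card (semigroups_with f (f + 1)) + card ?U"
    by (rule card_Un_le)
  finally show ?thesis
    using card_semigroups_with_Suc_le[of f] card_UN_le[OF fin, of "semigroups_with f"] by linarith
qed

definition depth_two_semigroup :: "nat \<Rightarrow> nat set \<Rightarrow> nat set" where
  "depth_two_semigroup f A = {0, f div 2 + 1} \<union> A \<union> {f<..}"

lemma depth_two_semigroup:
  assumes f: "3 \<le> f" and A: "A \<subseteq> {f div 2 + 1<..<f}"
  defines "S \<equiv> depth_two_semigroup f A"
  shows "numerical_semigroup S" "frobenius S = int f" "depth S = 2"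
proof -
  have large: "f div 2 + 1 \<le> x" if "x \<in> S" "0 < x" for x
    using that A unfolding S_def depth_two_semigroup_def by auto
  have above: "n \<in> S" if "f < n" for n
    using that unfolding S_def depth_two_semigroup_def by simp
  have "f \<notin> S"
    using A f unfolding S_def depth_two_semigroup_def by auto
  then have conductor: "conductor S = f + 1"
    using above by (rule conductor_eqI)
  have multiplicity: "multiplicity_ns S = f div 2 + 1"
    using large unfolding S_def depth_two_semigroup_def by (intro multiplicity_eqI) auto
  show "numerical_semigroup S"
    unfolding numerical_semigroup_def
  proof (intro conjI ballI)
    show "0 \<in> S"
      unfolding S_def depth_two_semigroup_def by simp
    show "x + y \<in> S" if "x \<in> S" "y \<in> S" for x y
      using that large[of x] large[of y] above[of "x + y"] by (cases "x = 0 \<or> y = 0") auto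
    have "UNIV - S \<subseteq> {..f}"
      using above not_le by blast
    then show "finite (UNIV - S)"
      by (rule finite_subset) simp
  qed
  show "frobenius S = int f"
    unfolding frobenius_def conductor by simp
  have "depth S \<le> 2" "\<not> depth S \<le> 1"
    using depth_le_iff[of S] f unfolding conductor multiplicity by simp_all
  then show "depth S = 2"
    by simp
qed

lemma Fr_depth_2_ge:
  assumes f: "3 \<le> f" shows "2 ^ (f - 2 - f div 2) \<le> Fr_depth 2 f"
proof -
  let ?D = "{S. numerical_semigroup S \<and> frobenius S = int f \<and> depth S = 2}"
  have "finite ?D"
    using finite_frobenius_semigroups by (rule finite_subset[rotated]) auto
  moreover have "inj_on (depth_two_semigroup f) (Pow {f div 2 + 1<..<f})"
  proof (rule inj_onI)
    have recover: "depth_two_semigroup f B \<inter> {f div 2 + 1<..<f} = B"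
      if "B \<subseteq> {f div 2 + 1<..<f}" for B
      using that unfolding depth_two_semigroup_def by auto
    fix A A' assume "A \<in> Pow {f div 2 + 1<..<f}" "A' \<in> Pow {f div 2 + 1<..<f}"
      and "depth_two_semigroup f A = depth_two_semigroup f A'"
    then show "A = A'"
      using recover[of A] recover[of A'] by simp
  qed
  moreover have "depth_two_semigroup f ` Pow {f div 2 + 1<..<f} \<subseteq> ?D"
    using depth_two_semigroup[OF f] by auto
  ultimately have "card (Pow {f div 2 + 1<..<f}) \<le> card ?D"
    by (intro card_inj_on_le)
  then show ?thesis
    unfolding Fr_depth_def by (simp add: card_Pow)
qed

(* The first summand covers the multiplicities m <= sqrt f, the second those above sqrt f. *)
definition deep_bound :: "nat \<Rightarrow> real" where
  "deep_bound f = (real f + 2) powr sqrt (real f)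
     + 2 powr (real f / 2) * (9 / 10) powr ((sqrt (real f) - 16) / 16)"

lemma deep_bound_nonneg: "0 \<le> deep_bound f"
  unfolding deep_bound_def by simp

lemma real_le_of_weighted_square:
  fixes c s f :: nat and x :: real
  assumes weight: "10 ^ s * c\<^sup>2 \<le> 2 ^ f * 9 ^ s" and x: "x \<le> real s"
  shows "real c \<le> 2 powr (real f / 2) * (9 / 10) powr (x / 2)"
proof (rule power2_le_imp_le)
  have "real (10 ^ s * c\<^sup>2) \<le> real (2 ^ f * 9 ^ s)"
    using weight by (simp only: of_nat_le_iff)
  then have "(real c)\<^sup>2 \<le> 2 ^ f * 9 ^ s / 10 ^ s"
    by (simp add: field_simps)
  also have "\<dots> = 2 ^ f * (9 / 10) ^ s"
    by (simp add: power_divide)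
  also have "\<dots> = 2 powr real f * (9 / 10) powr real s"
    by (simp add: powr_realpow)
  also have "\<dots> \<le> 2 powr real f * (9 / 10) powr x"
    using x by (intro mult_left_mono powr_mono') simp_all
  also have "\<dots> = (2 powr (real f / 2) * (9 / 10) powr (x / 2))\<^sup>2"
    by (simp add: power_mult_distrib powr_power)
  finally show "(real c)\<^sup>2 \<le> (2 powr (real f / 2) * (9 / 10) powr (x / 2))\<^sup>2" .
qed simp

lemma card_semigroups_with_le_deep_bound:
  assumes m: "m \<in> deep_multiplicities f"
  shows "real (card (semigroups_with f m)) \<le> deep_bound f"
proof (cases "real m \<le> sqrt (real f)")
  case True
  have "real (card (semigroups_with f m)) \<le> (real f + 2) ^ m"
    using card_semigroups_with_le_power[of f m]
    by (metis of_nat_add of_nat_le_iff of_nat_numeral of_nat_power)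
  also have "\<dots> = (real f + 2) powr real m"
    by (simp add: powr_realpow)
  also have "\<dots> \<le> (real f + 2) powr sqrt (real f)"
    using True by (intro powr_mono) simp_all
  finally show ?thesis
    unfolding deep_bound_def by (simp add: add_increasing2)
next
  case False
  obtain s where s: "m \<le> 8 * s + 16" "10 ^ s * (card (semigroups_with f m))\<^sup>2 \<le> 2 ^ f * 9 ^ s"
    using card_semigroups_with_sq_le m unfolding deep_multiplicities_def by blast
  have "real m \<le> 8 * real s + 16"
    using s(1) by linarith
  then have "(sqrt (real f) - 16) / 8 \<le> real s"
    using False by simp
  then have "real (card (semigroups_with f m))
      \<le> 2 powr (real f / 2) * (9 / 10) powr ((sqrt (real f) - 16) / 8 / 2)"
    by (rule real_le_of_weighted_square[OF s(2)])
  then show ?thesis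
    unfolding deep_bound_def by (simp add: add_increasing)
qed

lemma card_other_depth_le_deep_bound: "real (card (other_depth f)) \<le> 1 + real f * deep_bound f"
proof -
  have "card (deep_multiplicities f) \<le> f"
    using card_mono[OF _ deep_multiplicities_subset] by fastforce
  have "real (card (other_depth f))
      \<le> 1 + (\<Sum>m\<in>deep_multiplicities f. real (card (semigroups_with f m)))"
    using card_other_depth_le[of f] by (metis of_nat_1 of_nat_add of_nat_le_iff of_nat_sum)
  also have "\<dots> \<le> 1 + (\<Sum>m\<in>deep_multiplicities f. deep_bound f)"
    using card_semigroups_with_le_deep_bound by (intro add_left_mono sum_mono) simp
  also have "\<dots> \<le> 1 + real f * deep_bound f"
    using \<open>card (deep_multiplicities f) \<le> f\<close> deep_bound_nonneg by (simp add: mult_right_mono)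
  finally show ?thesis .
qed

lemma card_other_depth_bigo: "(\<lambda>f. real (card (other_depth f))) \<in> O(\<lambda>f. 1 + real f * deep_bound f)"
  using card_other_depth_le_deep_bound deep_bound_nonneg
  by (intro landau_o.big_mono always_eventually) simp

lemma two_powr_half_le_Fr_depth_2:
  assumes "3 \<le> f" shows "2 powr (real f / 2) \<le> 4 * real (Fr_depth 2 f)"
proof -
  have "f \<le> 2 * (f - 2 - f div 2) + 4"
    using assms by presburger
  then have "2 powr (real f / 2) \<le> 2 powr (real (f - 2 - f div 2) + 2)"
    by (intro powr_mono) linarith+
  also have "\<dots> = 4 * 2 ^ (f - 2 - f div 2)"
    by (simp add: powr_add powr_realpow)
  also have "\<dots> \<le> 4 * real (Fr_depth 2 f)"
    using Fr_depth_2_ge[OF assms]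
    by (metis mult_le_cancel_left_pos of_nat_le_iff of_nat_numeral of_nat_power zero_less_numeral)
  finally show ?thesis .
qed

lemma two_powr_half_bigo_Fr_depth_2_3:
  "(\<lambda>f. 2 powr (real f / 2)) \<in> O(\<lambda>f. real (Fr_depth 2 f + Fr_depth 3 f))"
proof (rule bigoI[where c = 4])
  show "\<forall>\<^sub>F f in at_top. norm (2 powr (real f / 2)) \<le> 4 * norm (real (Fr_depth 2 f + Fr_depth 3 f))"
    using eventually_ge_at_top[of 3]
  proof eventually_elim
    case (elim f)
    then show ?case
      using two_powr_half_le_Fr_depth_2[OF elim] by simp
  qed
qed

theorem corollary4p2:
  shows "(\<lambda>f. real (Fr f)) \<sim>[at_top] (\<lambda>f. real (Fr_depth 2 f + Fr_depth 3 f))"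
proof -
  have "(\<lambda>f. real (card (other_depth f))) \<in> O(\<lambda>f. 1 + real f * deep_bound f)"
    by (rule card_other_depth_bigo)
  also have "(\<lambda>f. 1 + real f * deep_bound f) \<in> o(\<lambda>f. 2 powr (real f / 2))"
    unfolding deep_bound_def by real_asymp
  also have "(\<lambda>f. 2 powr (real f / 2)) \<in> O(\<lambda>f. real (Fr_depth 2 f + Fr_depth 3 f))"
    by (rule two_powr_half_bigo_Fr_depth_2_3)
  finally have "(\<lambda>f. real (card (other_depth f))) \<in> o(\<lambda>f. real (Fr_depth 2 f + Fr_depth 3 f))" .
  moreover have "(\<lambda>f. real (Fr f))
      = (\<lambda>f. real (Fr_depth 2 f + Fr_depth 3 f) + real (card (other_depth f)))"
    by (simp add: Fr_eq)
  ultimately show ?thesis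
    by (simp add: asymp_equiv_add_right)
qed

end
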